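(* Let $g(t)$, $t\in[0,T)$, be a solution of the Ricci flow $\partial_tg_{ij}=-2R_{ij}$ on an $n$-manifold $M$, and for $\epsilon,\delta>0$ let $\tilde g_{\epsilon,\delta}=g(t)+\big(R+\frac{\epsilon}{2(t+\delta)}\big)dt^2$ on $M\times[0,T)$. At points where $\tilde g_{\epsilon,\delta}$ is positive-definite, the Riemann curvature tensor of its Levi-Civita connection satisfies: 1) $\tilde R_{ijk}^l=R_{ijk}^l-(R_i^lR_{jk}-R_j^lR_{ik})(R+\epsilon(2t+2\delta)^{-1})^{-1}$ for $1\le i,j,k,l\le n$; 2) $\tilde R_{0jk}^l=-\nabla_kR_j^l+\nabla^lR_{jk}-\tfrac12(R_{jk}\nabla^lR-R_j^l\nabla_kR)(R+\epsilon(2t+2\delta)^{-1})^{-1}$ for $1\le j,k,l\le n$; 3) $\tilde R_{i00}^l=\partial_tR_i^l-\tfrac12\nabla_i\nabla^lR-R_i^mR_m^l-\Big[\Big(\frac{\partial_tR}{2}+\frac{-\epsilon}{4(t+\delta)^2}\Big)R_i^l-\frac{\nabla_iR\nabla^lR}{4}\Big](R+\epsilon(2t+2\delta)^{-1})^{-1}$ for $1\le i,l\le n$.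
   Context: Coordinates $x^1,\dots,x^n$ on $M$ and $x^0=t$. For a connection with Christoffel symbols $\Gamma_{ij}^k$, the curvature is $R_{ijk}^l=\partial_i\Gamma_{jk}^l-\partial_j\Gamma_{ik}^l+\Gamma_{jk}^m\Gamma_{im}^l-\Gamma_{ik}^m\Gamma_{jm}^l$ (for $\tilde g_{\epsilon,\delta}$, indices and sums range over $\{0,\dots,n\}$ with $\partial_0=\partial_t$). For $g(t)$: $R_{jk}=R_{pjk}^p$, $R=g^{jk}R_{jk}$, $R_i^l=g^{lm}R_{im}$, indices raised with $g(t)^{-1}$, $\nabla$ the Levi-Civita connection of $g(t)$, and $\partial_tR_i^l$ the time derivative of the components $R_i^l$. *)

theory Defs
  imports "HOL-Analysis.Analysis"
begin

text \<open>Spatial indices 1..n are the elements of a finite type 'n;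
  space-time indices 0..n are the elements of 'n option, with None playing the role of the
  index 0 (time) and Some i the role of the spatial index i.\<close>

type_synonym 'n fld = "real \<Rightarrow> real^'n \<Rightarrow> real"

definition pd :: "'n::finite option \<Rightarrow> 'n fld \<Rightarrow> 'n fld" where
  "pd d F = (case d of
      None \<Rightarrow> (\<lambda>t x. deriv (\<lambda>s. F s x) t)
    | Some i \<Rightarrow> (\<lambda>t x. deriv (\<lambda>s. F t (x + s *\<^sub>R axis i 1)) 0))"

primrec pds :: "'n::finite option list \<Rightarrow> 'n fld \<Rightarrow> 'n fld" where
  "pds [] F = F"
| "pds (d # ds) F = pd d (pds ds F)"

definition smooth_on :: "(real \<times> (real^'n::finite)) set \<Rightarrow> 'n fld \<Rightarrow> bool" where
  "smooth_on U F \<longleftrightarrow> (\<forall>ds.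
      continuous_on U (\<lambda>p. pds ds F (fst p) (snd p)) \<and>
      (\<forall>(t,x)\<in>U. (\<lambda>s. pds ds F s x) differentiable (at t) \<and>
         (\<forall>i. (\<lambda>s. pds ds F t (x + s *\<^sub>R axis i 1)) differentiable (at 0))))"

definition posdef_at :: "('a::finite \<Rightarrow> 'a \<Rightarrow> 'n fld) \<Rightarrow> real \<Rightarrow> real^'n \<Rightarrow> bool" where
  "posdef_at G t x \<longleftrightarrow> (\<forall>v::'a \<Rightarrow> real. v \<noteq> (\<lambda>_. 0) \<longrightarrow>
      (\<Sum>a\<in>UNIV. \<Sum>b\<in>UNIV. G a b t x * v a * v b) > 0)"

definition ginv :: "('a::finite \<Rightarrow> 'a \<Rightarrow> 'n fld) \<Rightarrow> 'a \<Rightarrow> 'a \<Rightarrow> 'n fld" where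
  "ginv G a b = (\<lambda>t x. matrix_inv (\<chi> c d. G c d t x) $ a $ b)"

definition Chr :: "('a::finite \<Rightarrow> 'a \<Rightarrow> 'n fld) \<Rightarrow> ('a \<Rightarrow> 'n fld \<Rightarrow> 'n fld)
    \<Rightarrow> 'a \<Rightarrow> 'a \<Rightarrow> 'a \<Rightarrow> 'n fld" where
  "Chr G D i j k = (\<lambda>t x. (1/2) * (\<Sum>l\<in>UNIV. ginv G k l t x *
      (D i (G j l) t x + D j (G i l) t x - D l (G i j) t x)))"

definition Riem :: "('a::finite \<Rightarrow> 'a \<Rightarrow> 'n fld) \<Rightarrow> ('a \<Rightarrow> 'n fld \<Rightarrow> 'n fld)
    \<Rightarrow> 'a \<Rightarrow> 'a \<Rightarrow> 'a \<Rightarrow> 'a \<Rightarrow> 'n fld" where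
  "Riem G D i j k l = (\<lambda>t x. D i (Chr G D j k l) t x - D j (Chr G D i k l) t x
      + (\<Sum>m\<in>UNIV. Chr G D j k m t x * Chr G D i m l t x)
      - (\<Sum>m\<in>UNIV. Chr G D i k m t x * Chr G D j m l t x))"

abbreviation Dsp :: "'n::finite \<Rightarrow> 'n fld \<Rightarrow> 'n fld" where
  "Dsp i \<equiv> pd (Some i)"

definition Rm :: "('n::finite \<Rightarrow> 'n \<Rightarrow> 'n fld) \<Rightarrow> 'n \<Rightarrow> 'n \<Rightarrow> 'n \<Rightarrow> 'n \<Rightarrow> 'n fld" where
  "Rm g = Riem g Dsp"

definition Ric :: "('n::finite \<Rightarrow> 'n \<Rightarrow> 'n fld) \<Rightarrow> 'n \<Rightarrow> 'n \<Rightarrow> 'n fld" where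
  "Ric g j k = (\<lambda>t x. \<Sum>p\<in>UNIV. Rm g p j k p t x)"

definition Scal :: "('n::finite \<Rightarrow> 'n \<Rightarrow> 'n fld) \<Rightarrow> 'n fld" where
  "Scal g = (\<lambda>t x. \<Sum>j\<in>UNIV. \<Sum>k\<in>UNIV. ginv g j k t x * Ric g j k t x)"

definition RicUp :: "('n::finite \<Rightarrow> 'n \<Rightarrow> 'n fld) \<Rightarrow> 'n \<Rightarrow> 'n \<Rightarrow> 'n fld" where
  "RicUp g i l = (\<lambda>t x. \<Sum>m\<in>UNIV. ginv g l m t x * Ric g i m t x)"

definition nabRicUp :: "('n::finite \<Rightarrow> 'n \<Rightarrow> 'n fld) \<Rightarrow> 'n \<Rightarrow> 'n \<Rightarrow> 'n \<Rightarrow> 'n fld" where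
  "nabRicUp g k j l = (\<lambda>t x. Dsp k (RicUp g j l) t x
      + (\<Sum>m\<in>UNIV. Chr g Dsp k m l t x * RicUp g j m t x)
      - (\<Sum>m\<in>UNIV. Chr g Dsp k j m t x * RicUp g m l t x))"

definition nabRic :: "('n::finite \<Rightarrow> 'n \<Rightarrow> 'n fld) \<Rightarrow> 'n \<Rightarrow> 'n \<Rightarrow> 'n \<Rightarrow> 'n fld" where
  "nabRic g m j k = (\<lambda>t x. Dsp m (Ric g j k) t x
      - (\<Sum>p\<in>UNIV. Chr g Dsp m j p t x * Ric g p k t x)
      - (\<Sum>p\<in>UNIV. Chr g Dsp m k p t x * Ric g j p t x))"

definition nabUpRic :: "('n::finite \<Rightarrow> 'n \<Rightarrow> 'n fld) \<Rightarrow> 'n \<Rightarrow> 'n \<Rightarrow> 'n \<Rightarrow> 'n fld" where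
  "nabUpRic g l j k = (\<lambda>t x. \<Sum>m\<in>UNIV. ginv g l m t x * nabRic g m j k t x)"

definition gradUp :: "('n::finite \<Rightarrow> 'n \<Rightarrow> 'n fld) \<Rightarrow> 'n \<Rightarrow> 'n fld" where
  "gradUp g l = (\<lambda>t x. \<Sum>m\<in>UNIV. ginv g l m t x * Dsp m (Scal g) t x)"

definition hessUp :: "('n::finite \<Rightarrow> 'n \<Rightarrow> 'n fld) \<Rightarrow> 'n \<Rightarrow> 'n \<Rightarrow> 'n fld" where
  "hessUp g i l = (\<lambda>t x. Dsp i (gradUp g l) t x
      + (\<Sum>m\<in>UNIV. Chr g Dsp i m l t x * gradUp g m t x))"

definition gtil :: "('n::finite \<Rightarrow> 'n \<Rightarrow> 'n fld) \<Rightarrow> real \<Rightarrow> real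
    \<Rightarrow> 'n option \<Rightarrow> 'n option \<Rightarrow> 'n fld" where
  "gtil g \<epsilon> \<delta> a b = (case (a, b) of
      (Some i, Some j) \<Rightarrow> g i j
    | (None, None) \<Rightarrow> (\<lambda>t x. Scal g t x + \<epsilon> / (2 * (t + \<delta>)))
    | _ \<Rightarrow> (\<lambda>t x. 0))"

definition Rtil :: "('n::finite \<Rightarrow> 'n \<Rightarrow> 'n fld) \<Rightarrow> real \<Rightarrow> real
    \<Rightarrow> 'n option \<Rightarrow> 'n option \<Rightarrow> 'n option \<Rightarrow> 'n option \<Rightarrow> 'n fld" where
  "Rtil g \<epsilon> \<delta> = Riem (gtil g \<epsilon> \<delta>) pd"

end

(*
  In coordinates the metric g~ is block diagonal with time-time entry F = R + eps/(2(t+delta)),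
  so its inverse is block diagonal with entry 1/F, and by the Ricci flow equation its Christoffel
  symbols are Gamma~_ij^l = Gamma_ij^l, Gamma~_ij^0 = R_ij/F, Gamma~_0j^l = Gamma~_j0^l = -R_j^l,
  Gamma~_00^l = -(1/2) nabla^l R, Gamma~_i0^0 = Gamma~_0i^0 = d_i R/(2F) and
  Gamma~_00^0 = d_t F/(2F).  Substituting these into the curvature formula gives 1) at once and
  3) after recognising the Hessian nabla_i nabla^l R.  For 2) one needs in addition the evolution
  of the Christoffel symbols, d_t Gamma_jk^l = nabla^l R_jk - nabla_j R_k^l - nabla_k R_j^l,
  which follows from d_t g^lm = 2 R^lm, the symmetry of mixed partial derivatives and the
  compatibility of g^lm with Gamma.  The Christoffel formulas only hold where F does not vanish;
  since F > 0 at the point, this is enough to differentiate them there along coordinate lines.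
*)

theory Submission
  imports Defs
begin

section \<open>Partial derivatives along coordinate lines\<close>

definition coord_line :: "'n::finite option \<Rightarrow> real \<Rightarrow> real^'n \<Rightarrow> real \<Rightarrow> real \<times> (real^'n)" where
  "coord_line d s y r = (case d of None \<Rightarrow> (s + r, y) | Some i \<Rightarrow> (s, y + r *\<^sub>R axis i 1))"

definition line_restr :: "'n::finite option \<Rightarrow> 'n fld \<Rightarrow> real \<Rightarrow> real^'n \<Rightarrow> real \<Rightarrow> real" where
  "line_restr d F s y r = case_prod F (coord_line d s y r)"

text \<open>pd is defined through deriv and so has junk values where no derivative exists; derivatives
  are therefore computed with the relational has_pd.\<close>

definition has_pd :: "'n::finite option \<Rightarrow> 'n fld \<Rightarrow> real \<Rightarrow> real^'n \<Rightarrow> real \<Rightarrow> bool" where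
  "has_pd d F s y D \<longleftrightarrow> (line_restr d F s y has_real_derivative D) (at 0)"

definition pd_differentiable :: "'n::finite option \<Rightarrow> 'n fld \<Rightarrow> real \<Rightarrow> real^'n \<Rightarrow> bool" where
  "pd_differentiable d F s y \<longleftrightarrow> (\<exists>D. has_pd d F s y D)"

lemma line_restr_None: "line_restr None F s y = (\<lambda>r. F (s + r) y)"
  by (simp add: line_restr_def coord_line_def fun_eq_iff)

lemma line_restr_Some: "line_restr (Some i) F s y = (\<lambda>r. F s (y + r *\<^sub>R axis i 1))"
  by (simp add: line_restr_def coord_line_def fun_eq_iff)

lemma line_restr_eq: "line_restr d F s y = (\<lambda>r. F (fst (coord_line d s y r)) (snd (coord_line d s y r)))"
  by (simp add: line_restr_def split_beta fun_eq_iff)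

lemma coord_line_0 [simp]: "coord_line d s y 0 = (s, y)"
  by (simp add: coord_line_def split: option.split)

lemma line_restr_0 [simp]: "line_restr d F s y 0 = F s y"
  by (simp add: line_restr_def)

lemma eventually_coord_line_in_open:
  assumes "open V" "(s, y) \<in> V"
  shows "eventually (\<lambda>r. coord_line d s y r \<in> V) (nhds 0)"
proof -
  have "continuous_on UNIV (coord_line d s y)"
    unfolding coord_line_def by (cases d) (auto intro!: continuous_intros)
  then have "open (coord_line d s y -` V)"
    using assms(1) by (simp add: continuous_on_open_vimage)
  then show ?thesis
    using eventually_nhds_in_open[of "coord_line d s y -` V" 0] assms(2) by simp
qed

lemma pd_eq_deriv_line_restr: "pd d F s y = deriv (line_restr d F s y) 0"
proof (cases d)
  case None
  have "DERIV (\<lambda>s'. F s' y) s :> D \<longleftrightarrow> DERIV (\<lambda>r. F (s + r) y) 0 :> D" for D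
    using DERIV_shift[of "\<lambda>s'. F s' y" _ 0 s] by (simp add: add.commute)
  then show ?thesis
    using None by (simp add: pd_def line_restr_None deriv_def)
qed (simp add: pd_def line_restr_Some)

lemma has_pd_imp_pd: "has_pd d F s y D \<Longrightarrow> pd d F s y = D"
  unfolding has_pd_def pd_eq_deriv_line_restr by (rule DERIV_imp_deriv)

lemma pd_differentiable_has_pd: "pd_differentiable d F s y \<Longrightarrow> has_pd d F s y (pd d F s y)"
  unfolding pd_differentiable_def using has_pd_imp_pd by metis

lemma has_pd_imp_pd_differentiable: "has_pd d F s y D \<Longrightarrow> pd_differentiable d F s y"
  unfolding pd_differentiable_def by blast

lemma has_pd_None_shift: "has_pd None F (s + u) y D \<longleftrightarrow> DERIV (\<lambda>u. F (s + u) y) u :> D"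
  using DERIV_shift[of "\<lambda>u. F (s + u) y" D 0 u] by (simp add: has_pd_def line_restr_None add_ac)

lemma has_pd_Some_shift:
  "has_pd (Some i) F s (y + v *\<^sub>R axis i 1) D \<longleftrightarrow> DERIV (\<lambda>v. F s (y + v *\<^sub>R axis i 1)) v :> D"
  using DERIV_shift[of "\<lambda>v. F s (y + v *\<^sub>R axis i 1)" D 0 v]
  by (simp add: has_pd_def line_restr_Some scaleR_add_left add_ac)

lemma has_pd_cong_eventually:
  assumes "eventually (\<lambda>r. line_restr d F s y r = line_restr d G s y r) (nhds 0)"
  shows "has_pd d F s y D \<longleftrightarrow> has_pd d G s y D"
  unfolding has_pd_def by (rule DERIV_cong_ev) (use assms in auto)

lemma pd_cong_eventually:
  assumes "eventually (\<lambda>r. line_restr d F s y r = line_restr d G s y r) (nhds 0)"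
  shows "pd d F s y = pd d G s y"
  unfolding pd_eq_deriv_line_restr deriv_def
  using has_pd_cong_eventually[OF assms] by (simp add: has_pd_def)

lemma eventually_line_restr_eq_open:
  assumes "open V" "(s, y) \<in> V" "\<And>a b. (a, b) \<in> V \<Longrightarrow> F a b = G a b"
  shows "eventually (\<lambda>r. line_restr d F s y r = line_restr d G s y r) (nhds 0)"
  using eventually_coord_line_in_open[OF assms(1,2), of d]
  by (rule eventually_mono) (auto simp: line_restr_def assms(3) split: prod.split)

lemma pd_cong_open:
  assumes "open V" "(s, y) \<in> V" "\<And>a b. (a, b) \<in> V \<Longrightarrow> F a b = G a b"
  shows "pd d F s y = pd d G s y"
  by (rule pd_cong_eventually[OF eventually_line_restr_eq_open[OF assms]])

lemma has_pd_cong_open: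
  assumes "open V" "(s, y) \<in> V" "\<And>a b. (a, b) \<in> V \<Longrightarrow> F a b = G a b"
  shows "has_pd d F s y D \<longleftrightarrow> has_pd d G s y D"
  by (rule has_pd_cong_eventually[OF eventually_line_restr_eq_open[OF assms]])

lemma pd_differentiable_cong_open:
  assumes "open V" "(s, y) \<in> V" "\<And>a b. (a, b) \<in> V \<Longrightarrow> F a b = G a b"
  shows "pd_differentiable d F s y \<longleftrightarrow> pd_differentiable d G s y"
proof -
  have "has_pd d F s y D \<longleftrightarrow> has_pd d G s y D" for D
    using assms by (rule has_pd_cong_open)
  then show ?thesis unfolding pd_differentiable_def by blast
qed

lemma has_pd_const: "has_pd d (\<lambda>s y. c) s y 0"
  unfolding has_pd_def line_restr_eq by (rule DERIV_const)

lemma pd_differentiable_const [simp]: "pd_differentiable d (\<lambda>s y. c) s y"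
  using has_pd_const by (rule has_pd_imp_pd_differentiable)

lemma has_pd_time: "has_pd d (\<lambda>s y. s) s y (if d = None then 1 else 0)"
  by (cases d) (auto simp: has_pd_def line_restr_None line_restr_Some intro!: derivative_eq_intros)

lemma has_pd_add:
  "has_pd d F s y D \<Longrightarrow> has_pd d G s y E \<Longrightarrow> has_pd d (\<lambda>s y. F s y + G s y) s y (D + E)"
  unfolding has_pd_def line_restr_eq by (rule DERIV_add)

lemma has_pd_diff:
  "has_pd d F s y D \<Longrightarrow> has_pd d G s y E \<Longrightarrow> has_pd d (\<lambda>s y. F s y - G s y) s y (D - E)"
  unfolding has_pd_def line_restr_eq by (rule DERIV_diff)

lemma has_pd_minus: "has_pd d F s y D \<Longrightarrow> has_pd d (\<lambda>s y. - F s y) s y (- D)"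
  unfolding has_pd_def line_restr_eq by (rule DERIV_minus)

lemma has_pd_cmult: "has_pd d F s y D \<Longrightarrow> has_pd d (\<lambda>s y. c * F s y) s y (c * D)"
  unfolding has_pd_def line_restr_eq by (rule DERIV_cmult)

lemma has_pd_mult:
  "has_pd d F s y D \<Longrightarrow> has_pd d G s y E \<Longrightarrow>
    has_pd d (\<lambda>s y. F s y * G s y) s y (D * G s y + F s y * E)"
  unfolding has_pd_def line_restr_eq
  by (drule (1) DERIV_mult) (simp add: mult.commute)

lemma has_pd_divide:
  "has_pd d F s y D \<Longrightarrow> has_pd d G s y E \<Longrightarrow> G s y \<noteq> 0 \<Longrightarrow>
    has_pd d (\<lambda>s y. F s y / G s y) s y ((D * G s y - F s y * E) / (G s y * G s y))"
  unfolding has_pd_def line_restr_eq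
  by (drule (1) DERIV_divide) simp_all

lemma has_pd_sum:
  "(\<And>i. i \<in> S \<Longrightarrow> has_pd d (F i) s y (D i)) \<Longrightarrow>
    has_pd d (\<lambda>s y. \<Sum>i\<in>S. F i s y) s y (\<Sum>i\<in>S. D i)"
  unfolding has_pd_def line_restr_eq by (rule DERIV_sum)

lemma pd_differentiable_cmult:
  "pd_differentiable d F s y \<Longrightarrow> pd_differentiable d (\<lambda>s y. c * F s y) s y"
  using has_pd_cmult unfolding pd_differentiable_def by blast

lemma pd_differentiable_add:
  "pd_differentiable d F s y \<Longrightarrow> pd_differentiable d G s y \<Longrightarrow>
    pd_differentiable d (\<lambda>s y. F s y + G s y) s y"
  using has_pd_add unfolding pd_differentiable_def by blast

lemma pd_differentiable_minus:
  "pd_differentiable d F s y \<Longrightarrow> pd_differentiable d (\<lambda>s y. - F s y) s y"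
  using has_pd_minus unfolding pd_differentiable_def by blast

lemma pd_differentiable_mult:
  "pd_differentiable d F s y \<Longrightarrow> pd_differentiable d G s y \<Longrightarrow>
    pd_differentiable d (\<lambda>s y. F s y * G s y) s y"
  using has_pd_mult unfolding pd_differentiable_def by blast

lemma pd_differentiable_divide:
  "pd_differentiable d F s y \<Longrightarrow> pd_differentiable d G s y \<Longrightarrow> G s y \<noteq> 0 \<Longrightarrow>
    pd_differentiable d (\<lambda>s y. F s y / G s y) s y"
  using has_pd_divide unfolding pd_differentiable_def by blast

lemma pd_differentiable_sum:
  "(\<And>i. i \<in> S \<Longrightarrow> pd_differentiable d (F i) s y) \<Longrightarrow>
    pd_differentiable d (\<lambda>s y. \<Sum>i\<in>S. F i s y) s y"
  by (metis has_pd_imp_pd_differentiable has_pd_sum pd_differentiable_has_pd)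

lemma pd_differentiable_prod:
  assumes "\<And>i. i \<in> S \<Longrightarrow> pd_differentiable d (F i) s y"
  shows "pd_differentiable d (\<lambda>s y. \<Prod>i\<in>S. F i s y) s y"
proof (cases "finite S")
  case True
  then show ?thesis
    using assms by (induction S rule: finite_induct) (simp_all add: pd_differentiable_mult)
qed simp

lemma pd_differentiable_det:
  assumes "\<And>i j. pd_differentiable d (H i j) s y"
  shows "pd_differentiable d (\<lambda>s y. det ((\<chi> i j. H i j s y) :: real^'n::finite^'n)) s y"
  unfolding det_def
  by (simp add: assms pd_differentiable_sum pd_differentiable_cmult pd_differentiable_prod)

lemma pd_mult:
  "pd_differentiable d F s y \<Longrightarrow> pd_differentiable d G s y \<Longrightarrow>
    pd d (\<lambda>s y. F s y * G s y) s y = pd d F s y * G s y + F s y * pd d G s y"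
  by (intro has_pd_imp_pd has_pd_mult pd_differentiable_has_pd)

lemma pd_cmult: "pd_differentiable d F s y \<Longrightarrow> pd d (\<lambda>s y. c * F s y) s y = c * pd d F s y"
  by (intro has_pd_imp_pd has_pd_cmult pd_differentiable_has_pd)

lemma pd_minus: "pd_differentiable d F s y \<Longrightarrow> pd d (\<lambda>s y. - F s y) s y = - pd d F s y"
  by (intro has_pd_imp_pd has_pd_minus pd_differentiable_has_pd)

lemma pd_sum:
  "(\<And>i. i \<in> S \<Longrightarrow> pd_differentiable d (F i) s y) \<Longrightarrow>
    pd d (\<lambda>s y. \<Sum>i\<in>S. F i s y) s y = (\<Sum>i\<in>S. pd d (F i) s y)"
  by (intro has_pd_imp_pd has_pd_sum pd_differentiable_has_pd)

lemma pd_const [simp]: "pd d (\<lambda>s y. c) s y = 0"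
  by (rule has_pd_imp_pd[OF has_pd_const])

lemma smooth_on_has_pd:
  assumes "smooth_on U F" "(s, y) \<in> U"
  shows "has_pd d (pds ds F) s y (pds (d # ds) F s y)"
proof (cases d)
  case None
  have "(\<lambda>s'. pds ds F s' y) differentiable (at s)"
    using assms unfolding smooth_on_def by blast
  then have "DERIV (\<lambda>s'. pds ds F s' y) (0 + s) :> pds (d # ds) F s y"
    using None by (simp add: DERIV_deriv_iff_real_differentiable pd_def)
  then have "DERIV (\<lambda>r. pds ds F (r + s) y) 0 :> pds (d # ds) F s y"
    by (simp only: DERIV_shift)
  then show ?thesis
    using None by (simp add: has_pd_def line_restr_None add.commute)
next
  case (Some i)
  have "(\<lambda>r. pds ds F s (y + r *\<^sub>R axis i 1)) differentiable (at 0)"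
    using assms unfolding smooth_on_def by blast
  then have "DERIV (\<lambda>r. pds ds F s (y + r *\<^sub>R axis i 1)) 0 :> pd (Some i) (pds ds F) s y"
    by (simp only: DERIV_deriv_iff_real_differentiable pd_def option.case)
  then show ?thesis
    using Some by (simp only: has_pd_def line_restr_Some pds.simps)
qed

section \<open>Inverse matrices\<close>

lemma matrix_inv_unique:
  fixes A B :: "real^'n^'n"
  assumes "A ** B = mat 1" "B ** A = mat 1"
  shows "matrix_inv A = B"
proof -
  have right_inverse_unique: "C = B" if "A ** C = mat 1" for C
    by (metis assms(2) matrix_mul_assoc matrix_mul_lid matrix_mul_rid that)
  have "A ** matrix_inv A = mat 1 \<and> matrix_inv A ** A = mat 1"
    unfolding matrix_inv_def by (rule someI[of _ B]) (use assms in simp)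
  then show ?thesis using right_inverse_unique by blast
qed

lemma matrix_inv_det_nonzero:
  fixes A :: "real^'n^'n"
  assumes "det A \<noteq> 0"
  shows "A ** matrix_inv A = mat 1" "matrix_inv A ** A = mat 1"
proof -
  obtain B where "A ** B = mat 1" "B ** A = mat 1"
    using assms invertible_det_nz unfolding invertible_def by blast
  then show "A ** matrix_inv A = mat 1" "matrix_inv A ** A = mat 1"
    using matrix_inv_unique by auto
qed

lemma matrix_inv_symmetric:
  fixes A :: "real^'n^'n"
  assumes "det A \<noteq> 0" "transpose A = A"
  shows "matrix_inv A $ i $ j = matrix_inv A $ j $ i"
proof -
  have "A ** transpose (matrix_inv A) = transpose (matrix_inv A ** A)"
    by (simp add: matrix_transpose_mul assms(2))
  then have left: "A ** transpose (matrix_inv A) = mat 1"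
    by (simp add: matrix_inv_det_nonzero assms(1) transpose_mat)
  have "transpose (matrix_inv A) ** A = transpose (A ** matrix_inv A)"
    by (simp add: matrix_transpose_mul assms(2))
  then have "transpose (matrix_inv A) ** A = mat 1"
    by (simp add: matrix_inv_det_nonzero assms(1) transpose_mat)
  with left have "matrix_inv A = transpose (matrix_inv A)"
    by (rule matrix_inv_unique)
  then have "matrix_inv A $ i $ j = transpose (matrix_inv A) $ i $ j"
    by (rule arg_cong)
  then show ?thesis
    by (simp add: transpose_def)
qed

lemma matrix_inv_cramer:
  fixes M :: "'n::finite \<Rightarrow> 'n \<Rightarrow> real"
  assumes "det (\<chi> i j. M i j) \<noteq> 0"
  shows "matrix_inv (\<chi> i j. M i j) $ a $ b =
    det (\<chi> i j. if j = a then (if i = b then 1 else 0) else M i j) / det (\<chi> i j. M i j)"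
proof -
  let ?x = "\<chi> k. matrix_inv (\<chi> i j. M i j) $ k $ b"
  have "(\<chi> i j. M i j) *v ?x = axis b 1"
    using matrix_inv_det_nonzero(1)[OF assms]
    by (auto simp: vec_eq_iff matrix_vector_mult_def matrix_matrix_mult_def axis_def mat_def)
  then have "?x $ a = det (\<chi> i j. if j = a then axis b 1 $ i else (\<chi> i j. M i j) $ i $ j) / det (\<chi> i j. M i j)"
    using cramer[OF assms] by simp
  then show ?thesis
    by (simp add: axis_def cong: if_cong)
qed

lemma posdef_at_det_nonzero:
  fixes G :: "'n::finite \<Rightarrow> 'n \<Rightarrow> 'n fld"
  assumes "posdef_at G s y"
  shows "det (\<chi> i j. G i j s y) \<noteq> 0"
proof -
  let ?A = "(\<chi> i j. G i j s y) :: real^'n^'n"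
  have "v = 0" if "?A *v v = 0" for v
  proof (rule ccontr)
    assume "v \<noteq> 0"
    then have "(\<lambda>a. v $ a) \<noteq> (\<lambda>_. 0)" by (auto simp: vec_eq_iff)
    then have "(\<Sum>a\<in>UNIV. \<Sum>b\<in>UNIV. G a b s y * v $ a * v $ b) > 0"
      using assms unfolding posdef_at_def by blast
    also have "(\<Sum>a\<in>UNIV. \<Sum>b\<in>UNIV. G a b s y * v $ a * v $ b) = (\<Sum>a\<in>UNIV. v $ a * (?A *v v) $ a)"
      by (simp add: matrix_vector_mult_def sum_distrib_left mult_ac)
    finally show False using that by simp
  qed
  then have "invertible ?A"
    using matrix_left_invertible_ker invertible_left_inverse by blast
  then show ?thesis by (simp add: invertible_det_nz)
qed

lemma solve_inverse_product_rule:
  fixes A A' B X :: "'n::finite \<Rightarrow> 'n \<Rightarrow> real"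
  assumes product_rule: "\<And>a c. (\<Sum>b\<in>UNIV. A' a b * B b c + A a b * X b c) = 0"
    and left_inverse: "\<And>l b. (\<Sum>a\<in>UNIV. B l a * A a b) = (if l = b then 1 else 0)"
  shows "X l m = - (\<Sum>a\<in>UNIV. \<Sum>b\<in>UNIV. B l a * A' a b * B b m)"
proof -
  have AX: "(\<Sum>b\<in>UNIV. A a b * X b c) = - (\<Sum>b\<in>UNIV. A' a b * B b c)" for a c
    using product_rule[of a c] by (simp add: sum.distrib eq_neg_iff_add_eq_0 add.commute)
  have "X l m = (\<Sum>b\<in>UNIV. if l = b then X b m else 0)"
    by simp
  also have "\<dots> = (\<Sum>b\<in>UNIV. (\<Sum>a\<in>UNIV. B l a * A a b) * X b m)"
    by (rule sum.cong) (simp_all add: left_inverse)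
  also have "\<dots> = (\<Sum>b\<in>UNIV. \<Sum>a\<in>UNIV. B l a * A a b * X b m)"
    by (simp add: sum_distrib_right)
  also have "\<dots> = (\<Sum>a\<in>UNIV. B l a * (\<Sum>b\<in>UNIV. A a b * X b m))"
    by (subst sum.swap) (simp add: sum_distrib_left mult.assoc)
  also have "\<dots> = - (\<Sum>a\<in>UNIV. \<Sum>b\<in>UNIV. B l a * A' a b * B b m)"
    by (simp add: AX sum_distrib_left sum_negf mult.assoc)
  finally show ?thesis .
qed

section \<open>Symmetry of mixed partial derivatives\<close>

lemma second_difference_mean_value:
  fixes f fu fuv :: "real \<Rightarrow> real \<Rightarrow> real"
  assumes "0 < h"
    and fu: "\<And>u v. 0 \<le> u \<Longrightarrow> u \<le> h \<Longrightarrow> 0 \<le> v \<Longrightarrow> v \<le> h \<Longrightarrow> DERIV (\<lambda>u. f u v) u :> fu u v"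
    and fuv: "\<And>u v. 0 \<le> u \<Longrightarrow> u \<le> h \<Longrightarrow> 0 \<le> v \<Longrightarrow> v \<le> h \<Longrightarrow> DERIV (fu u) v :> fuv u v"
  obtains \<xi> \<eta> where "0 < \<xi>" "\<xi> < h" "0 < \<eta>" "\<eta> < h"
    "f h h - f h 0 - f 0 h + f 0 0 = h * h * fuv \<xi> \<eta>"
proof -
  have "DERIV (\<lambda>u. f u h - f u 0) u :> fu u h - fu u 0" if "0 \<le> u" "u \<le> h" for u
    using that assms(1) by (intro DERIV_diff fu) auto
  from MVT2[OF assms(1) this] obtain \<xi> where \<xi>: "0 < \<xi>" "\<xi> < h"
    "(f h h - f h 0) - (f 0 h - f 0 0) = (h - 0) * (fu \<xi> h - fu \<xi> 0)"
    by blast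
  have "DERIV (fu \<xi>) v :> fuv \<xi> v" if "0 \<le> v" "v \<le> h" for v
    using that \<xi>(1,2) by (intro fuv) auto
  from MVT2[OF assms(1) this] obtain \<eta> where \<eta>: "0 < \<eta>" "\<eta> < h"
    "fu \<xi> h - fu \<xi> 0 = (h - 0) * fuv \<xi> \<eta>"
    by blast
  show ?thesis
    by (rule that[OF \<xi>(1,2) \<eta>(1,2)]) (use \<xi>(3) \<eta>(3) in simp)
qed

lemma second_difference_both_orders:
  fixes f fu fv fuv fvu :: "real \<Rightarrow> real \<Rightarrow> real"
  assumes "0 < h" "h < r"
    and fu: "\<And>u v. \<bar>u\<bar> < r \<Longrightarrow> \<bar>v\<bar> < r \<Longrightarrow> DERIV (\<lambda>u. f u v) u :> fu u v"
    and fv: "\<And>u v. \<bar>u\<bar> < r \<Longrightarrow> \<bar>v\<bar> < r \<Longrightarrow> DERIV (f u) v :> fv u v"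
    and fuv: "\<And>u v. \<bar>u\<bar> < r \<Longrightarrow> \<bar>v\<bar> < r \<Longrightarrow> DERIV (fu u) v :> fuv u v"
    and fvu: "\<And>u v. \<bar>u\<bar> < r \<Longrightarrow> \<bar>v\<bar> < r \<Longrightarrow> DERIV (\<lambda>u. fv u v) u :> fvu u v"
  obtains \<xi> \<eta> \<xi>' \<eta>' where "\<xi> \<in> {0<..<h}" "\<eta> \<in> {0<..<h}" "\<xi>' \<in> {0<..<h}" "\<eta>' \<in> {0<..<h}"
    "fuv \<xi> \<eta> = fvu \<xi>' \<eta>'"
proof -
  obtain \<xi> \<eta> where \<xi>\<eta>: "0 < \<xi>" "\<xi> < h" "0 < \<eta>" "\<eta> < h"
    "f h h - f h 0 - f 0 h + f 0 0 = h * h * fuv \<xi> \<eta>"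
    by (rule second_difference_mean_value[of h f fu fuv]) (use assms(1,2) in \<open>auto intro!: fu fuv\<close>)
  obtain \<eta>' \<xi>' where \<xi>\<eta>': "0 < \<eta>'" "\<eta>' < h" "0 < \<xi>'" "\<xi>' < h"
    "f h h - f 0 h - f h 0 + f 0 0 = h * h * fvu \<xi>' \<eta>'"
    by (rule second_difference_mean_value[of h "\<lambda>v u. f u v" "\<lambda>v u. fv u v" "\<lambda>v u. fvu u v"])
      (use assms(1,2) in \<open>auto intro!: fv fvu\<close>)
  have "h * h * fuv \<xi> \<eta> = h * h * fvu \<xi>' \<eta>'"
    using \<xi>\<eta>(5) \<xi>\<eta>'(5) by linarith
  with assms(1) \<xi>\<eta> \<xi>\<eta>' show ?thesis
    by (intro that) auto
qed

lemma mixed_partials_commute: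
  fixes f fu fv fuv fvu :: "real \<Rightarrow> real \<Rightarrow> real"
  assumes "0 < r"
    and fu: "\<And>u v. \<bar>u\<bar> < r \<Longrightarrow> \<bar>v\<bar> < r \<Longrightarrow> DERIV (\<lambda>u. f u v) u :> fu u v"
    and fv: "\<And>u v. \<bar>u\<bar> < r \<Longrightarrow> \<bar>v\<bar> < r \<Longrightarrow> DERIV (f u) v :> fv u v"
    and fuv: "\<And>u v. \<bar>u\<bar> < r \<Longrightarrow> \<bar>v\<bar> < r \<Longrightarrow> DERIV (fu u) v :> fuv u v"
    and fvu: "\<And>u v. \<bar>u\<bar> < r \<Longrightarrow> \<bar>v\<bar> < r \<Longrightarrow> DERIV (\<lambda>u. fv u v) u :> fvu u v"
    and cont_fuv: "isCont (\<lambda>p. fuv (fst p) (snd p)) (0, 0)"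
    and cont_fvu: "isCont (\<lambda>p. fvu (fst p) (snd p)) (0, 0)"
  shows "fuv 0 0 = fvu 0 0"
proof -
  have close: "\<bar>fuv 0 0 - fvu 0 0\<bar> < e" if "e > 0" for e
  proof -
    obtain \<rho>1 where \<rho>1: "\<rho>1 > 0" "\<And>p. dist p (0, 0) < \<rho>1 \<Longrightarrow> \<bar>fuv (fst p) (snd p) - fuv 0 0\<bar> < e / 2"
      using cont_fuv \<open>e > 0\<close> unfolding continuous_at_eps_delta dist_real_def
      by (drule_tac x = "e / 2" in spec) auto
    obtain \<rho>2 where \<rho>2: "\<rho>2 > 0" "\<And>p. dist p (0, 0) < \<rho>2 \<Longrightarrow> \<bar>fvu (fst p) (snd p) - fvu 0 0\<bar> < e / 2"
      using cont_fvu \<open>e > 0\<close> unfolding continuous_at_eps_delta dist_real_def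
      by (drule_tac x = "e / 2" in spec) auto
    define h where "h = min r (min \<rho>1 \<rho>2) / 2"
    have h: "0 < h" "h < r" "2 * h \<le> \<rho>1" "2 * h \<le> \<rho>2"
      using \<open>0 < r\<close> \<rho>1(1) \<rho>2(1) by (auto simp: h_def)
    have near: "dist (u, v) (0, 0) < 2 * h" if "u \<in> {0<..<h}" "v \<in> {0<..<h}" for u v
      using norm_Pair_le[of u v] that by (simp add: dist_norm)
    obtain \<xi> \<eta> \<xi>' \<eta>' where \<xi>: "\<xi> \<in> {0<..<h}" and \<eta>: "\<eta> \<in> {0<..<h}"
      and \<xi>': "\<xi>' \<in> {0<..<h}" and \<eta>': "\<eta>' \<in> {0<..<h}" and eq: "fuv \<xi> \<eta> = fvu \<xi>' \<eta>'"
      by (rule second_difference_both_orders[OF h(1,2) fu fv fuv fvu])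
    have "\<bar>fuv \<xi> \<eta> - fuv 0 0\<bar> < e / 2"
      using \<rho>1(2)[of "(\<xi>, \<eta>)"] near[OF \<xi> \<eta>] h(3) by simp
    moreover have "\<bar>fvu \<xi>' \<eta>' - fvu 0 0\<bar> < e / 2"
      using \<rho>2(2)[of "(\<xi>', \<eta>')"] near[OF \<xi>' \<eta>'] h(4) by simp
    ultimately show ?thesis
      using eq by linarith
  qed
  show ?thesis
    using close[of "\<bar>fuv 0 0 - fvu 0 0\<bar>"] by (cases "fuv 0 0 = fvu 0 0") auto
qed

lemma open_contains_coordinate_square:
  fixes e :: "'a::real_normed_vector"
  assumes "open U" "(t, x) \<in> U"
  obtains r where "r > 0" "\<And>u v. \<bar>u\<bar> < r \<Longrightarrow> \<bar>v\<bar> < r \<Longrightarrow> (t + u, x + v *\<^sub>R e) \<in> U"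
proof -
  define P where "P = (\<lambda>p::real \<times> real. (t + fst p, x + snd p *\<^sub>R e))"
  have "open (P -` U)"
    using assms(1) unfolding P_def by (intro continuous_on_open_vimage continuous_intros) auto
  moreover have "(0, 0) \<in> P -` U"
    using assms(2) by (simp add: P_def)
  ultimately obtain \<rho> where \<rho>: "\<rho> > 0" "ball (0, 0) \<rho> \<subseteq> P -` U"
    using open_contains_ball by blast
  have "(t + u, x + v *\<^sub>R e) \<in> U" if "\<bar>u\<bar> < \<rho> / 2" "\<bar>v\<bar> < \<rho> / 2" for u v
  proof -
    have "dist (0, 0) (u, v) < \<rho>"
      using norm_Pair_le[of "-u" "-v"] that by (simp add: dist_norm)
    then show ?thesis using \<rho>(2) by (auto simp: P_def)
  qed
  then show ?thesis
    using that[of "\<rho> / 2"] \<rho>(1) by simp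
qed

lemma smooth_on_isCont_coordinate_square:
  assumes "open U" "(t, x) \<in> U" "smooth_on U F"
  shows "isCont (\<lambda>p. pds ds F (t + fst p) (x + snd p *\<^sub>R e)) (0, 0)"
proof -
  have "isCont (\<lambda>q. pds ds F (fst q) (snd q)) (t, x)"
    using assms continuous_on_eq_continuous_at unfolding smooth_on_def by blast
  moreover have "isCont (\<lambda>p::real \<times> real. (t + fst p, x + snd p *\<^sub>R e)) (0, 0)"
    by (intro continuous_intros)
  ultimately show ?thesis
    using isCont_o2 by fastforce
qed

lemma smooth_on_mixed_pds_commute:
  fixes F :: "'n::finite fld"
  assumes "open U" "(t, x) \<in> U" "smooth_on U F"
  shows "pds [None, Some j] F t x = pds [Some j, None] F t x"
proof -
  define e where "e = (axis j 1 :: real^'n)"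
  obtain \<rho> where \<rho>: "\<rho> > 0" "\<And>u v. \<bar>u\<bar> < \<rho> \<Longrightarrow> \<bar>v\<bar> < \<rho> \<Longrightarrow> (t + u, x + v *\<^sub>R e) \<in> U"
    using open_contains_coordinate_square[OF assms(1,2)] by metis
  note cont = smooth_on_isCont_coordinate_square[OF assms, of _ e]
  have dt: "DERIV (\<lambda>u. pds ds F (t + u) (x + v *\<^sub>R e)) u :> pds (None # ds) F (t + u) (x + v *\<^sub>R e)"
    if "\<bar>u\<bar> < \<rho>" "\<bar>v\<bar> < \<rho>" for u v ds
    using smooth_on_has_pd[OF assms(3) \<rho>(2)[OF that], of None ds] by (simp add: has_pd_None_shift)
  have dv: "DERIV (\<lambda>v. pds ds F (t + u) (x + v *\<^sub>R e)) v :> pds (Some j # ds) F (t + u) (x + v *\<^sub>R e)"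
    if "\<bar>u\<bar> < \<rho>" "\<bar>v\<bar> < \<rho>" for u v ds
    using smooth_on_has_pd[OF assms(3) \<rho>(2)[OF that], of "Some j" ds]
    by (simp add: has_pd_Some_shift e_def)
  have "pds [Some j, None] F (t + 0) (x + 0 *\<^sub>R e) = pds [None, Some j] F (t + 0) (x + 0 *\<^sub>R e)"
  proof (rule mixed_partials_commute[where f = "\<lambda>u v. F (t + u) (x + v *\<^sub>R e)"
        and fu = "\<lambda>u v. pds [None] F (t + u) (x + v *\<^sub>R e)"
        and fv = "\<lambda>u v. pds [Some j] F (t + u) (x + v *\<^sub>R e)"
        and fuv = "\<lambda>u v. pds [Some j, None] F (t + u) (x + v *\<^sub>R e)"
        and fvu = "\<lambda>u v. pds [None, Some j] F (t + u) (x + v *\<^sub>R e)"])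
    show "0 < \<rho>" by (rule \<rho>(1))
  qed (use dt[of _ _ "[]"] dt[of _ _ "[Some j]"] dv[of _ _ "[]"] dv[of _ _ "[None]"]
    cont[of "[Some j, None]"] cont[of "[None, Some j]"] in simp_all)
  then show ?thesis by simp
qed

section \<open>A Ricci flow in a chart\<close>

lemma sum_UNIV_option:
  "(\<Sum>a\<in>(UNIV::'n::finite option set). f a) = f None + (\<Sum>i\<in>UNIV. f (Some i))"
  by (simp add: UNIV_option_conv sum.reindex)

lemma gtil_Some_Some [simp]: "gtil g \<epsilon> \<delta> (Some i) (Some j) = g i j"
  and gtil_None_Some [simp]: "gtil g \<epsilon> \<delta> None (Some j) = (\<lambda>s y. 0)"
  and gtil_Some_None [simp]: "gtil g \<epsilon> \<delta> (Some i) None = (\<lambda>s y. 0)"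
  by (simp_all add: gtil_def)

locale ricci_flow_chart =
  fixes g :: "'n::finite \<Rightarrow> 'n \<Rightarrow> 'n fld"
    and U :: "(real \<times> (real^'n)) set"
    and \<epsilon> \<delta> t :: real and x :: "real^'n"
  assumes U_open: "open U"
    and U_time: "U \<subseteq> {0<..} \<times> UNIV"
    and g_smooth: "\<And>i j. smooth_on U (g i j)"
    and g_sym: "\<And>i j s y. (s, y) \<in> U \<Longrightarrow> g i j s y = g j i s y"
    and g_pos: "\<And>s y. (s, y) \<in> U \<Longrightarrow> posdef_at g s y"
    and ricci_flow: "\<And>i j s y. (s, y) \<in> U \<Longrightarrow>
        ((\<lambda>r. g i j r y) has_real_derivative (-2 * Ric g i j s y)) (at s)"
    and del: "\<delta> > 0"
    and pt: "(t, x) \<in> U"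
    and gtil_pos: "posdef_at (gtil g \<epsilon> \<delta>) t x"
begin

definition g00 :: "'n fld" where
  "g00 = (\<lambda>s y. Scal g s y + \<epsilon> / (2 * (s + \<delta>)))"

lemma gtil_None_None [simp]: "gtil g \<epsilon> \<delta> None None = g00"
  by (simp add: gtil_def g00_def)

lemma det_g_nonzero: "(s, y) \<in> U \<Longrightarrow> det (\<chi> i j. g i j s y) \<noteq> 0"
  by (rule posdef_at_det_nonzero[OF g_pos])

lemma ginv_g: "(s, y) \<in> U \<Longrightarrow> (\<Sum>b\<in>UNIV. ginv g l b s y * g b m s y) = (if l = m then 1 else 0)"
  using matrix_inv_det_nonzero(2)[OF det_g_nonzero, of s y]
  by (auto simp: ginv_def vec_eq_iff matrix_matrix_mult_def mat_def)

lemma g_ginv: "(s, y) \<in> U \<Longrightarrow> (\<Sum>b\<in>UNIV. g l b s y * ginv g b m s y) = (if l = m then 1 else 0)"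
  using matrix_inv_det_nonzero(1)[OF det_g_nonzero, of s y]
  by (auto simp: ginv_def vec_eq_iff matrix_matrix_mult_def mat_def)

lemma ginv_sym: "(s, y) \<in> U \<Longrightarrow> ginv g a b s y = ginv g b a s y"
  unfolding ginv_def
  by (rule matrix_inv_symmetric[OF det_g_nonzero]) (auto simp: transpose_def vec_eq_iff g_sym)

lemma pd_g_sym: "(s, y) \<in> U \<Longrightarrow> pd d (g a b) s y = pd d (g b a) s y"
  by (rule pd_cong_open[OF U_open]) (auto simp: g_sym)

lemma has_pd_pds_g: "(s, y) \<in> U \<Longrightarrow> has_pd d (pds ds (g i j)) s y (pds (d # ds) (g i j) s y)"
  by (rule smooth_on_has_pd[OF g_smooth])

lemma pd_differentiable_pds_g: "(s, y) \<in> U \<Longrightarrow> pd_differentiable d (pds ds (g i j)) s y"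
  using has_pd_pds_g by (rule has_pd_imp_pd_differentiable)

lemma pd_differentiable_g: "(s, y) \<in> U \<Longrightarrow> pd_differentiable d (g i j) s y"
  using pd_differentiable_pds_g[of s y d "[]"] by simp

lemma pd_differentiable_ginv:
  assumes "(s, y) \<in> U"
  shows "pd_differentiable d (ginv g a b) s y"
proof -
  let ?cofactor = "\<lambda>s y. det ((\<chi> i j. if j = a then (if i = b then 1 else 0) else g i j s y) :: real^'n^'n)"
  have "pd_differentiable d (\<lambda>s y. if j = a then (if i = b then 1 else 0) else g i j s y) s y" for i j
    using assms by (cases "j = a"; cases "i = b") (simp_all add: pd_differentiable_g)
  then have "pd_differentiable d (\<lambda>s y. ?cofactor s y / det (\<chi> i j. g i j s y)) s y"
    using assms
    by (intro pd_differentiable_divide pd_differentiable_det det_g_nonzero pd_differentiable_g)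
  moreover have "ginv g a b s' y' = ?cofactor s' y' / det (\<chi> i j. g i j s' y')" if "(s', y') \<in> U" for s' y'
    unfolding ginv_def by (rule matrix_inv_cramer[OF det_g_nonzero[OF that]])
  ultimately show ?thesis
    by (subst pd_differentiable_cong_open[OF U_open assms,
          where G = "\<lambda>s y. ?cofactor s y / det (\<chi> i j. g i j s y)"]) auto
qed

lemma pd_ginv:
  assumes "(s, y) \<in> U"
  shows "pd d (ginv g l m) s y = - (\<Sum>a\<in>UNIV. \<Sum>b\<in>UNIV. ginv g l a s y * pd d (g a b) s y * ginv g b m s y)"
proof (rule solve_inverse_product_rule[where A = "\<lambda>a b. g a b s y"])
  show "(\<Sum>b\<in>UNIV. pd d (g a b) s y * ginv g b c s y + g a b s y * pd d (ginv g b c) s y) = 0" for a c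
  proof -
    have product_rule: "has_pd d (\<lambda>s y. \<Sum>b\<in>UNIV. g a b s y * ginv g b c s y) s y
        (\<Sum>b\<in>UNIV. pd d (g a b) s y * ginv g b c s y + g a b s y * pd d (ginv g b c) s y)"
      using assms
      by (intro has_pd_sum has_pd_mult pd_differentiable_has_pd pd_differentiable_g pd_differentiable_ginv)
    have "has_pd d (\<lambda>s y. \<Sum>b\<in>UNIV. g a b s y * ginv g b c s y) s y 0 \<longleftrightarrow>
        has_pd d (\<lambda>s y. if a = c then 1 else 0) s y 0"
      by (rule has_pd_cong_open[OF U_open assms]) (simp add: g_ginv)
    then have "has_pd d (\<lambda>s y. \<Sum>b\<in>UNIV. g a b s y * ginv g b c s y) s y 0"
      using has_pd_const by blast
    then have "pd d (\<lambda>s y. \<Sum>b\<in>UNIV. g a b s y * ginv g b c s y) s y = 0"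
      by (rule has_pd_imp_pd)
    with has_pd_imp_pd[OF product_rule] show ?thesis
      by simp
  qed
  show "(\<Sum>a\<in>UNIV. ginv g l a s y * g a b s y) = (if l = b then 1 else 0)" for l b
    by (rule ginv_g[OF assms])
qed

lemma pd_time_g: "(s, y) \<in> U \<Longrightarrow> pd None (g i j) s y = -2 * Ric g i j s y"
  unfolding pd_def using DERIV_imp_deriv[OF ricci_flow] by simp

lemma Ric_eq_pd_time: "(s, y) \<in> U \<Longrightarrow> Ric g i j s y = -(1/2) * pd None (g i j) s y"
  by (simp add: pd_time_g)

lemma Ric_sym: "(s, y) \<in> U \<Longrightarrow> Ric g i j s y = Ric g j i s y"
  by (simp add: Ric_eq_pd_time pd_g_sym)

lemma RicUp_eq_sum_Ric: "(s, y) \<in> U \<Longrightarrow> RicUp g i l s y = (\<Sum>m\<in>UNIV. ginv g l m s y * Ric g m i s y)"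
  unfolding RicUp_def by (intro sum.cong refl) (simp add: Ric_sym[of s y i])

lemma Chr_sym: "(s, y) \<in> U \<Longrightarrow> Chr g Dsp a b c s y = Chr g Dsp b a c s y"
  unfolding Chr_def by (simp add: pd_g_sym[of s y "Some _" a b] algebra_simps)

lemma has_pd_Ric:
  assumes "(s, y) \<in> U"
  shows "has_pd d (Ric g i j) s y (-(1/2) * pds [d, None] (g i j) s y)"
proof -
  have "has_pd d (\<lambda>s y. -(1/2) * pds [None] (g i j) s y) s y (-(1/2) * pds [d, None] (g i j) s y)"
    by (rule has_pd_cmult[OF has_pd_pds_g[OF assms]])
  then show ?thesis
    using has_pd_cong_open[OF U_open assms, of "Ric g i j"] by (simp add: Ric_eq_pd_time)
qed

lemma pd_Ric: "(s, y) \<in> U \<Longrightarrow> pd d (Ric g i j) s y = -(1/2) * pds [d, None] (g i j) s y"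
  using has_pd_Ric by (rule has_pd_imp_pd)

lemma pd_differentiable_Ric: "(s, y) \<in> U \<Longrightarrow> pd_differentiable d (Ric g i j) s y"
  using has_pd_Ric by (rule has_pd_imp_pd_differentiable)

lemma pd_differentiable_RicUp: "(s, y) \<in> U \<Longrightarrow> pd_differentiable d (RicUp g i l) s y"
  unfolding RicUp_def
  by (intro pd_differentiable_sum pd_differentiable_mult pd_differentiable_ginv pd_differentiable_Ric)

lemma pd_differentiable_Scal: "(s, y) \<in> U \<Longrightarrow> pd_differentiable d (Scal g) s y"
  unfolding Scal_def
  by (intro pd_differentiable_sum pd_differentiable_mult pd_differentiable_ginv pd_differentiable_Ric)

lemma pd_RicUp:
  "(s, y) \<in> U \<Longrightarrow> pd d (RicUp g j l) s y =
    (\<Sum>m\<in>UNIV. pd d (ginv g l m) s y * Ric g j m s y + ginv g l m s y * pd d (Ric g j m) s y)"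
  unfolding RicUp_def
  by (simp add: pd_sum pd_mult pd_differentiable_mult pd_differentiable_ginv pd_differentiable_Ric)

lemma pd_Scal:
  "(s, y) \<in> U \<Longrightarrow> pd d (Scal g) s y = (\<Sum>j\<in>UNIV. \<Sum>k\<in>UNIV.
      pd d (ginv g j k) s y * Ric g j k s y + ginv g j k s y * pd d (Ric g j k) s y)"
  unfolding Scal_def
  by (simp add: pd_sum pd_mult pd_differentiable_sum pd_differentiable_mult
      pd_differentiable_ginv pd_differentiable_Ric)

lemma pd_differentiable_pd_Scal:
  assumes "(s, y) \<in> U"
  shows "pd_differentiable d' (pd d (Scal g)) s y"
proof -
  let ?formula = "\<lambda>s y. \<Sum>j\<in>UNIV. \<Sum>k\<in>UNIV.
      - (\<Sum>a\<in>UNIV. \<Sum>b\<in>UNIV. ginv g j a s y * pds [d] (g a b) s y * ginv g b k s y) * Ric g j k s y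
      + ginv g j k s y * (-(1/2) * pds [d, None] (g j k) s y)"
  have "pd_differentiable d' ?formula s y"
    using assms
    by (intro pd_differentiable_sum pd_differentiable_add pd_differentiable_mult pd_differentiable_minus
        pd_differentiable_cmult pd_differentiable_ginv pd_differentiable_Ric pd_differentiable_pds_g)
  moreover have "pd d (Scal g) s' y' = ?formula s' y'" if "(s', y') \<in> U" for s' y'
    using that by (simp add: pd_Scal pd_ginv pd_Ric)
  ultimately show ?thesis
    by (subst pd_differentiable_cong_open[OF U_open assms, where G = ?formula]) auto
qed

lemma pd_differentiable_gradUp: "(s, y) \<in> U \<Longrightarrow> pd_differentiable d (gradUp g l) s y"
  unfolding gradUp_def
  by (intro pd_differentiable_sum pd_differentiable_mult pd_differentiable_ginv pd_differentiable_pd_Scal)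

subsection \<open>Christoffel symbols of the space-time metric\<close>

lemma time_pos: "(s, y) \<in> U \<Longrightarrow> s + \<delta> > 0"
  using U_time del by auto

lemma has_pd_g00:
  assumes "(s, y) \<in> U"
  shows "has_pd d g00 s y (pd d (Scal g) s y - (if d = None then \<epsilon> / (2 * (s + \<delta>)^2) else 0))"
proof -
  have "has_pd d (\<lambda>s y. \<epsilon> / (2 * (s + \<delta>))) s y
      ((0 * (2 * (s + \<delta>)) - \<epsilon> * (2 * ((if d = None then 1 else 0) + 0))) / (2 * (s + \<delta>) * (2 * (s + \<delta>))))"
    using time_pos[OF assms]
    by (intro has_pd_divide has_pd_const has_pd_cmult has_pd_add has_pd_time) simp
  also have "(0 * (2 * (s + \<delta>)) - \<epsilon> * (2 * ((if d = None then 1 else 0) + 0))) / (2 * (s + \<delta>) * (2 * (s + \<delta>)))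
      = - (if d = None then \<epsilon> / (2 * (s + \<delta>)^2) else 0)"
  proof -
    have "2 * (s + \<delta>) * (2 * (s + \<delta>)) = 2 * (2 * (s + \<delta>)^2)"
      by (simp add: power2_eq_square algebra_simps)
    then show ?thesis by simp
  qed
  finally show ?thesis
    unfolding g00_def
    using has_pd_add[OF pd_differentiable_has_pd[OF pd_differentiable_Scal[OF assms]]] by fastforce
qed

lemma pd_g00 [simp]:
  "(s, y) \<in> U \<Longrightarrow> pd d g00 s y = pd d (Scal g) s y - (if d = None then \<epsilon> / (2 * (s + \<delta>)^2) else 0)"
  using has_pd_g00 by (rule has_pd_imp_pd)

lemma g00_pos: "g00 t x > 0"
proof -
  define v :: "'n option \<Rightarrow> real" where "v = (\<lambda>a. if a = None then 1 else 0)"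
  have "v \<noteq> (\<lambda>_. 0)"
    by (auto simp: v_def fun_eq_iff)
  then have "(\<Sum>a\<in>UNIV. \<Sum>b\<in>UNIV. gtil g \<epsilon> \<delta> a b t x * v a * v b) > 0"
    using gtil_pos unfolding posdef_at_def by blast
  then show ?thesis
    by (simp add: sum_UNIV_option v_def)
qed

lemma g00_nonzero: "g00 t x \<noteq> 0"
  using g00_pos by simp

lemma eventually_g00_nonzero_on_line:
  "eventually (\<lambda>r. coord_line d t x r \<in> U \<and> case_prod g00 (coord_line d t x r) \<noteq> 0) (nhds 0)"
proof -
  have "isCont (line_restr d g00 t x) 0"
    using has_pd_g00[OF pt] unfolding has_pd_def by (rule DERIV_isCont)
  then obtain e where "e > 0" "\<And>r. dist 0 r < e \<Longrightarrow> line_restr d g00 t x r \<noteq> 0"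
    using continuous_at_avoid[of 0 "line_restr d g00 t x" 0] g00_pos by auto
  then have "eventually (\<lambda>r. line_restr d g00 t x r \<noteq> 0) (nhds 0)"
    unfolding eventually_nhds_metric by (metis dist_commute)
  then show ?thesis
    using eventually_coord_line_in_open[OF U_open pt]
    by eventually_elim (simp add: line_restr_def)
qed

lemma pd_cong_g00_nonzero:
  assumes "\<And>s y. (s, y) \<in> U \<Longrightarrow> g00 s y \<noteq> 0 \<Longrightarrow> F s y = G s y"
  shows "pd d F t x = pd d G t x"
proof (rule pd_cong_eventually)
  show "eventually (\<lambda>r. line_restr d F t x r = line_restr d G t x r) (nhds 0)"
    using eventually_g00_nonzero_on_line[of d]
    by (rule eventually_mono) (auto simp: line_restr_def assms split: prod.split)
qed

lemma ginv_gtil: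
  assumes "(s, y) \<in> U" "g00 s y \<noteq> 0"
  shows "ginv (gtil g \<epsilon> \<delta>) a b s y = (case (a, b) of
      (Some i, Some j) \<Rightarrow> ginv g i j s y
    | (None, None) \<Rightarrow> 1 / g00 s y
    | _ \<Rightarrow> 0)"
proof -
  define M :: "real^'n option^'n option" where "M = (\<chi> a b. gtil g \<epsilon> \<delta> a b s y)"
  define N :: "real^'n option^'n option" where "N = (\<chi> a b. case (a, b) of
      (Some i, Some j) \<Rightarrow> ginv g i j s y
    | (None, None) \<Rightarrow> 1 / g00 s y
    | _ \<Rightarrow> 0)"
  have "(M ** N) $ a $ c = mat 1 $ a $ c" "(N ** M) $ a $ c = mat 1 $ a $ c" for a c
    using assms
    by (cases a; cases c; simp add: M_def N_def matrix_matrix_mult_def mat_def sum_UNIV_option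
        g_ginv ginv_g)+
  then have "matrix_inv M = N"
    by (intro matrix_inv_unique) (simp_all add: vec_eq_iff)
  then show ?thesis
    by (simp add: ginv_def M_def N_def)
qed

text \<open>In the names Chr_gtil_abc the indices a, b (lower) and c (upper) follow the argument order of
  Chr, with 0 standing for the time index None.\<close>

lemmas Chr_gtil_simps = Chr_def sum_UNIV_option pd_time_g ginv_gtil

lemma Chr_gtil_jkl:
  "(s, y) \<in> U \<Longrightarrow> g00 s y \<noteq> 0 \<Longrightarrow>
    Chr (gtil g \<epsilon> \<delta>) pd (Some j) (Some k) (Some l) s y = Chr g Dsp j k l s y"
  by (simp add: Chr_gtil_simps)

lemma Chr_gtil_jk0:
  "(s, y) \<in> U \<Longrightarrow> g00 s y \<noteq> 0 \<Longrightarrow>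
    Chr (gtil g \<epsilon> \<delta>) pd (Some j) (Some k) None s y = Ric g j k s y / g00 s y"
  by (simp add: Chr_gtil_simps)

lemma Chr_gtil_j0l:
  "(s, y) \<in> U \<Longrightarrow> g00 s y \<noteq> 0 \<Longrightarrow>
    Chr (gtil g \<epsilon> \<delta>) pd (Some j) None (Some l) s y = - RicUp g j l s y"
  by (simp add: Chr_gtil_simps RicUp_def sum_distrib_left sum_negf mult_ac)

lemma Chr_gtil_0kl:
  "(s, y) \<in> U \<Longrightarrow> g00 s y \<noteq> 0 \<Longrightarrow>
    Chr (gtil g \<epsilon> \<delta>) pd None (Some k) (Some l) s y = - RicUp g k l s y"
  by (simp add: Chr_gtil_simps RicUp_def sum_distrib_left sum_negf mult_ac)

lemma Chr_gtil_j00: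
  "(s, y) \<in> U \<Longrightarrow> g00 s y \<noteq> 0 \<Longrightarrow>
    Chr (gtil g \<epsilon> \<delta>) pd (Some j) None None s y = Dsp j (Scal g) s y / (2 * g00 s y)"
  by (simp add: Chr_gtil_simps)

lemma Chr_gtil_0k0:
  "(s, y) \<in> U \<Longrightarrow> g00 s y \<noteq> 0 \<Longrightarrow>
    Chr (gtil g \<epsilon> \<delta>) pd None (Some k) None s y = Dsp k (Scal g) s y / (2 * g00 s y)"
  by (simp add: Chr_gtil_simps)

lemma Chr_gtil_00l:
  "(s, y) \<in> U \<Longrightarrow> g00 s y \<noteq> 0 \<Longrightarrow>
    Chr (gtil g \<epsilon> \<delta>) pd None None (Some l) s y = -(1/2) * gradUp g l s y"
  by (simp add: Chr_gtil_simps gradUp_def sum_distrib_left sum_negf mult_ac)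

lemma Chr_gtil_000:
  "(s, y) \<in> U \<Longrightarrow> g00 s y \<noteq> 0 \<Longrightarrow>
    Chr (gtil g \<epsilon> \<delta>) pd None None None s y =
      (pd None (Scal g) s y - \<epsilon> / (2 * (s + \<delta>)^2)) / (2 * g00 s y)"
  by (simp add: Chr_gtil_simps)

lemma pd_Chr_gtil_jkl:
  "pd d (Chr (gtil g \<epsilon> \<delta>) pd (Some j) (Some k) (Some l)) t x = pd d (Chr g Dsp j k l) t x"
  by (rule pd_cong_g00_nonzero) (rule Chr_gtil_jkl)

lemma pd_Chr_gtil_j0l:
  "pd d (Chr (gtil g \<epsilon> \<delta>) pd (Some j) None (Some l)) t x = - pd d (RicUp g j l) t x"
proof -
  have "pd d (Chr (gtil g \<epsilon> \<delta>) pd (Some j) None (Some l)) t x = pd d (\<lambda>s y. - RicUp g j l s y) t x"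
    by (rule pd_cong_g00_nonzero) (rule Chr_gtil_j0l)
  then show ?thesis
    using pd_minus[OF pd_differentiable_RicUp[OF pt]] by simp
qed

lemma pd_Chr_gtil_0kl:
  "pd d (Chr (gtil g \<epsilon> \<delta>) pd None (Some k) (Some l)) t x = - pd d (RicUp g k l) t x"
proof -
  have "pd d (Chr (gtil g \<epsilon> \<delta>) pd None (Some k) (Some l)) t x = pd d (\<lambda>s y. - RicUp g k l s y) t x"
    by (rule pd_cong_g00_nonzero) (rule Chr_gtil_0kl)
  then show ?thesis
    using pd_minus[OF pd_differentiable_RicUp[OF pt]] by simp
qed

lemma pd_Chr_gtil_00l:
  "pd d (Chr (gtil g \<epsilon> \<delta>) pd None None (Some l)) t x = -(1/2) * pd d (gradUp g l) t x"
proof -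
  have "pd d (Chr (gtil g \<epsilon> \<delta>) pd None None (Some l)) t x = pd d (\<lambda>s y. -(1/2) * gradUp g l s y) t x"
    by (rule pd_cong_g00_nonzero) (rule Chr_gtil_00l)
  also have "\<dots> = -(1/2) * pd d (gradUp g l) t x"
    by (rule pd_cmult[OF pd_differentiable_gradUp[OF pt]])
  finally show ?thesis .
qed

subsection \<open>Evolution of the Christoffel symbols under the Ricci flow\<close>

lemma pd_ginv_Chr:
  assumes q: "(s, y) \<in> U"
  shows "Dsp k (ginv g l m) s y =
    - (\<Sum>p\<in>UNIV. Chr g Dsp k p l s y * ginv g p m s y) - (\<Sum>p\<in>UNIV. Chr g Dsp k p m s y * ginv g l p s y)"
proof -
  \<comment> \<open>Both sums contract E with the inverse metric, the second one with E transposed; as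
    E p c + E c p = 2 Dsp k (g c p), together they give the contraction in pd_ginv.\<close>
  define E where "E = (\<lambda>p c. Dsp k (g p c) s y + Dsp p (g k c) s y - Dsp c (g k p) s y)"
  define S where "S = (\<lambda>E'. \<Sum>p\<in>UNIV. \<Sum>c\<in>UNIV. ginv g l c s y * ginv g p m s y * E' p c)"
  have first: "(\<Sum>p\<in>UNIV. Chr g Dsp k p l s y * ginv g p m s y) = 1/2 * S E"
    unfolding Chr_def E_def S_def by (simp add: sum_distrib_left sum_distrib_right mult_ac)
  have "(\<Sum>p\<in>UNIV. Chr g Dsp k p m s y * ginv g l p s y) =
      1/2 * (\<Sum>p\<in>UNIV. \<Sum>c\<in>UNIV. ginv g l p s y * ginv g m c s y * E p c)"
    unfolding Chr_def E_def by (simp add: sum_distrib_left sum_distrib_right mult_ac)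
  also have "(\<Sum>p\<in>UNIV. \<Sum>c\<in>UNIV. ginv g l p s y * ginv g m c s y * E p c) = S (\<lambda>p c. E c p)"
    unfolding S_def by (subst sum.swap) (simp add: ginv_sym[OF q, of m])
  finally have second: "(\<Sum>p\<in>UNIV. Chr g Dsp k p m s y * ginv g l p s y) = 1/2 * S (\<lambda>p c. E c p)" .
  have E_sym_sum: "E p c + E c p = 2 * Dsp k (g c p) s y" for p c
    unfolding E_def using pd_g_sym[OF q, of "Some k" p c] by simp
  have "S E + S (\<lambda>p c. E c p) =
      (\<Sum>p\<in>UNIV. \<Sum>c\<in>UNIV. ginv g l c s y * ginv g p m s y * (E p c + E c p))"
    unfolding S_def by (simp add: sum.distrib distrib_left)
  also have "\<dots> = 2 * (\<Sum>p\<in>UNIV. \<Sum>c\<in>UNIV. ginv g l c s y * Dsp k (g c p) s y * ginv g p m s y)"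
    by (simp add: E_sym_sum sum_distrib_left mult_ac)
  also have "\<dots> = - 2 * Dsp k (ginv g l m) s y"
    by (subst sum.swap) (simp add: pd_ginv[OF q])
  finally show ?thesis
    using first second by linarith
qed

lemma nabRicUp_eq_raise_nabRic:
  assumes q: "(s, y) \<in> U"
  shows "nabRicUp g k j l s y = (\<Sum>m\<in>UNIV. ginv g l m s y * nabRic g k j m s y)"
proof -
  have raise_Chr_l: "(\<Sum>m\<in>UNIV. (\<Sum>p\<in>UNIV. Chr g Dsp k p l s y * ginv g p m s y) * Ric g j m s y)
      = (\<Sum>m\<in>UNIV. Chr g Dsp k m l s y * RicUp g j m s y)"
    unfolding RicUp_def sum_distrib_left sum_distrib_right
    by (subst sum.swap) (simp add: mult_ac)
  have raise_Chr_m: "(\<Sum>m\<in>UNIV. (\<Sum>p\<in>UNIV. Chr g Dsp k p m s y * ginv g l p s y) * Ric g j m s y)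
      = (\<Sum>m\<in>UNIV. ginv g l m s y * (\<Sum>p\<in>UNIV. Chr g Dsp k m p s y * Ric g j p s y))"
    unfolding sum_distrib_left sum_distrib_right
    by (subst sum.swap) (simp add: mult_ac)
  have raise_RicUp: "(\<Sum>m\<in>UNIV. Chr g Dsp k j m s y * RicUp g m l s y)
      = (\<Sum>m\<in>UNIV. ginv g l m s y * (\<Sum>p\<in>UNIV. Chr g Dsp k j p s y * Ric g p m s y))"
    unfolding RicUp_def sum_distrib_left sum_distrib_right
    by (subst sum.swap) (simp add: mult_ac)
  have "(\<Sum>m\<in>UNIV. Dsp k (ginv g l m) s y * Ric g j m s y) =
      - (\<Sum>m\<in>UNIV. Chr g Dsp k m l s y * RicUp g j m s y)
      - (\<Sum>m\<in>UNIV. ginv g l m s y * (\<Sum>p\<in>UNIV. Chr g Dsp k m p s y * Ric g j p s y))"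
    unfolding pd_ginv_Chr[OF q] left_diff_distrib sum_subtractf mult_minus_left sum_negf
      raise_Chr_l raise_Chr_m ..
  then show ?thesis
    unfolding nabRicUp_def nabRic_def pd_RicUp[OF q] raise_RicUp
    by (simp add: sum.distrib sum_subtractf right_diff_distrib)
qed

lemma has_pd_time_Dsp_g:
  assumes q: "(s, y) \<in> U"
  shows "has_pd None (Dsp a (g b c)) s y (-2 * Dsp a (Ric g b c) s y)"
proof -
  have "has_pd None (pds [Some a] (g b c)) s y (pds [Some a, None] (g b c) s y)"
    using has_pd_pds_g[OF q, of None "[Some a]"]
    unfolding smooth_on_mixed_pds_commute[OF U_open q g_smooth] .
  then show ?thesis
    by (simp add: pd_Ric[OF q])
qed

lemma pd_time_ginv:
  "(s, y) \<in> U \<Longrightarrow>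
    pd None (ginv g l m) s y = 2 * (\<Sum>a\<in>UNIV. \<Sum>b\<in>UNIV. ginv g l a s y * Ric g a b s y * ginv g b m s y)"
  by (simp add: pd_ginv pd_time_g sum_distrib_left sum_negf mult_ac)

lemma pd_time_Chr_partial:
  assumes q: "(s, y) \<in> U"
  shows "pd None (Chr g Dsp j k l) s y = 2 * (\<Sum>p\<in>UNIV. Chr g Dsp j k p s y * RicUp g p l s y)
    - (\<Sum>m\<in>UNIV. ginv g l m s y * (Dsp j (Ric g k m) s y + Dsp k (Ric g j m) s y - Dsp m (Ric g j k) s y))"
proof -
  define S where "S = (\<lambda>m. Dsp j (g k m) s y + Dsp k (g j m) s y - Dsp m (g j k) s y)"
  have "has_pd None (Chr g Dsp j k l) s y (1/2 * (\<Sum>m\<in>UNIV. pd None (ginv g l m) s y * S m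
      + ginv g l m s y * (-2 * Dsp j (Ric g k m) s y + -2 * Dsp k (Ric g j m) s y - -2 * Dsp m (Ric g j k) s y)))"
    unfolding Chr_def S_def
    by (intro has_pd_cmult has_pd_sum has_pd_mult has_pd_diff has_pd_add has_pd_time_Dsp_g[OF q]
        pd_differentiable_has_pd pd_differentiable_ginv[OF q])
  then have "pd None (Chr g Dsp j k l) s y = 1/2 * (\<Sum>m\<in>UNIV. pd None (ginv g l m) s y * S m)
      - (\<Sum>m\<in>UNIV. ginv g l m s y * (Dsp j (Ric g k m) s y + Dsp k (Ric g j m) s y - Dsp m (Ric g j k) s y))"
    by (auto dest!: has_pd_imp_pd simp: sum.distrib sum_subtractf algebra_simps sum_distrib_left)
  moreover have "(\<Sum>m\<in>UNIV. pd None (ginv g l m) s y * S m) =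
      (\<Sum>m\<in>UNIV. \<Sum>a\<in>UNIV. \<Sum>b\<in>UNIV. 2 * (ginv g l a s y * Ric g a b s y) * (ginv g b m s y * S m))"
    by (simp add: pd_time_ginv[OF q] sum_distrib_left sum_distrib_right mult_ac)
  also have "\<dots> = (\<Sum>a\<in>UNIV. \<Sum>b\<in>UNIV. \<Sum>m\<in>UNIV. 2 * (ginv g l a s y * Ric g a b s y) * (ginv g b m s y * S m))"
    by (subst sum.swap) (intro sum.cong refl sum.swap)
  also have "\<dots> = (\<Sum>a\<in>UNIV. \<Sum>b\<in>UNIV. 4 * (ginv g l a s y * Ric g a b s y * Chr g Dsp j k b s y))"
    by (intro sum.cong refl) (simp add: Chr_def S_def sum_distrib_left mult_ac)
  also have "\<dots> = 4 * (\<Sum>p\<in>UNIV. Chr g Dsp j k p s y * RicUp g p l s y)"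
    unfolding RicUp_eq_sum_Ric[OF q] sum_distrib_left
    by (subst sum.swap) (simp add: mult_ac)
  ultimately show ?thesis
    by simp
qed

lemma nabRic_cyclic_sum:
  assumes q: "(s, y) \<in> U"
  shows "nabRic g j k m s y + nabRic g k j m s y - nabRic g m j k s y =
    Dsp j (Ric g k m) s y + Dsp k (Ric g j m) s y - Dsp m (Ric g j k) s y
    - 2 * (\<Sum>p\<in>UNIV. Chr g Dsp j k p s y * Ric g p m s y)"
proof -
  have "(\<Sum>p\<in>UNIV. Chr g Dsp k j p s y * Ric g p m s y) = (\<Sum>p\<in>UNIV. Chr g Dsp j k p s y * Ric g p m s y)"
    "(\<Sum>p\<in>UNIV. Chr g Dsp m j p s y * Ric g p k s y) = (\<Sum>p\<in>UNIV. Chr g Dsp j m p s y * Ric g k p s y)"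
    "(\<Sum>p\<in>UNIV. Chr g Dsp m k p s y * Ric g j p s y) = (\<Sum>p\<in>UNIV. Chr g Dsp k m p s y * Ric g j p s y)"
    by (intro sum.cong refl; metis Chr_sym Ric_sym q)+
  then show ?thesis
    unfolding nabRic_def by simp
qed

lemma pd_time_Chr:
  assumes q: "(s, y) \<in> U"
  shows "pd None (Chr g Dsp j k l) s y = nabUpRic g l j k s y - nabRicUp g j k l s y - nabRicUp g k j l s y"
proof -
  have "nabUpRic g l j k s y - nabRicUp g j k l s y - nabRicUp g k j l s y =
      - (\<Sum>m\<in>UNIV. ginv g l m s y * (nabRic g j k m s y + nabRic g k j m s y - nabRic g m j k s y))"
    unfolding nabUpRic_def nabRicUp_eq_raise_nabRic[OF q]
    by (simp add: sum_subtractf sum.distrib right_diff_distrib distrib_left)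
  also have "\<dots> = 2 * (\<Sum>m\<in>UNIV. ginv g l m s y * (\<Sum>p\<in>UNIV. Chr g Dsp j k p s y * Ric g p m s y))
      - (\<Sum>m\<in>UNIV. ginv g l m s y * (Dsp j (Ric g k m) s y + Dsp k (Ric g j m) s y - Dsp m (Ric g j k) s y))"
    unfolding nabRic_cyclic_sum[OF q]
    by (simp add: sum_subtractf right_diff_distrib sum_distrib_left mult_ac)
  also have "(\<Sum>m\<in>UNIV. ginv g l m s y * (\<Sum>p\<in>UNIV. Chr g Dsp j k p s y * Ric g p m s y))
      = (\<Sum>p\<in>UNIV. Chr g Dsp j k p s y * RicUp g p l s y)"
    unfolding RicUp_def sum_distrib_left
    by (subst sum.swap) (simp add: mult_ac)
  finally show ?thesis
    by (simp add: pd_time_Chr_partial[OF q])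
qed

subsection \<open>Curvature of the space-time metric\<close>

lemma g00_at_pt_eq: "Scal g t x + \<epsilon> * inverse (2 * t + 2 * \<delta>) = g00 t x"
  by (simp add: g00_def divide_inverse algebra_simps)

lemma Rtil_space:
  "Rtil g \<epsilon> \<delta> (Some i) (Some j) (Some k) (Some l) t x = Rm g i j k l t x
    - (RicUp g i l t x * Ric g j k t x - RicUp g j l t x * Ric g i k t x) / g00 t x"
  unfolding Rtil_def Rm_def Riem_def
  by (simp add: pd_Chr_gtil_jkl sum_UNIV_option Chr_gtil_jkl[OF pt g00_nonzero]
      Chr_gtil_jk0[OF pt g00_nonzero] Chr_gtil_j0l[OF pt g00_nonzero] divide_inverse algebra_simps)

lemma Rtil_time_space:
  "Rtil g \<epsilon> \<delta> None (Some j) (Some k) (Some l) t x = - nabRicUp g k j l t x + nabUpRic g l j k t x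
    - (1/2) * (Ric g j k t x * gradUp g l t x - RicUp g j l t x * Dsp k (Scal g) t x) / g00 t x"
proof -
  have "Rtil g \<epsilon> \<delta> None (Some j) (Some k) (Some l) t x =
      (nabUpRic g l j k t x - nabRicUp g j k l t x - nabRicUp g k j l t x) - - Dsp j (RicUp g k l) t x
      + (Ric g j k t x / g00 t x * (-(1/2) * gradUp g l t x)
         + (\<Sum>m\<in>UNIV. Chr g Dsp j k m t x * - RicUp g m l t x))
      - (Dsp k (Scal g) t x / (2 * g00 t x) * - RicUp g j l t x
         + (\<Sum>m\<in>UNIV. - RicUp g k m t x * Chr g Dsp j m l t x))"
    unfolding Rtil_def Riem_def
    by (simp only: pd_Chr_gtil_jkl pd_time_Chr[OF pt] pd_Chr_gtil_0kl sum_UNIV_option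
        Chr_gtil_jkl[OF pt g00_nonzero] Chr_gtil_jk0[OF pt g00_nonzero] Chr_gtil_00l[OF pt g00_nonzero]
        Chr_gtil_0kl[OF pt g00_nonzero] Chr_gtil_0k0[OF pt g00_nonzero] Chr_gtil_j0l[OF pt g00_nonzero])
  moreover have "nabRicUp g j k l t x = Dsp j (RicUp g k l) t x
      + (\<Sum>m\<in>UNIV. RicUp g k m t x * Chr g Dsp j m l t x) - (\<Sum>m\<in>UNIV. Chr g Dsp j k m t x * RicUp g m l t x)"
    by (simp add: nabRicUp_def mult.commute)
  moreover have "Ric g j k t x / g00 t x * (-(1/2) * gradUp g l t x)
      - Dsp k (Scal g) t x / (2 * g00 t x) * - RicUp g j l t x
      = - (1/2) * (Ric g j k t x * gradUp g l t x - RicUp g j l t x * Dsp k (Scal g) t x) / g00 t x"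
    using g00_nonzero by (simp add: field_simps)
  ultimately show ?thesis
    by (simp add: sum_negf)
qed

lemma Rtil_space_time_time:
  "Rtil g \<epsilon> \<delta> (Some i) None None (Some l) t x =
    pd None (RicUp g i l) t x - (1/2) * hessUp g i l t x - (\<Sum>m\<in>UNIV. RicUp g i m t x * RicUp g m l t x)
    - ((pd None (Scal g) t x / 2 + (- \<epsilon>) / (4 * (t + \<delta>)^2)) * RicUp g i l t x
       - Dsp i (Scal g) t x * gradUp g l t x / 4) / g00 t x"
proof -
  have "Rtil g \<epsilon> \<delta> (Some i) None None (Some l) t x =
      -(1/2) * Dsp i (gradUp g l) t x - - pd None (RicUp g i l) t x
      + ((pd None (Scal g) t x - \<epsilon> / (2 * (t + \<delta>)^2)) / (2 * g00 t x) * - RicUp g i l t x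
         + (\<Sum>m\<in>UNIV. -(1/2) * gradUp g m t x * Chr g Dsp i m l t x))
      - (Dsp i (Scal g) t x / (2 * g00 t x) * (-(1/2) * gradUp g l t x)
         + (\<Sum>m\<in>UNIV. - RicUp g i m t x * - RicUp g m l t x))"
    unfolding Rtil_def Riem_def
    by (simp only: pd_Chr_gtil_00l pd_Chr_gtil_j0l sum_UNIV_option Chr_gtil_000[OF pt g00_nonzero]
        Chr_gtil_j0l[OF pt g00_nonzero] Chr_gtil_00l[OF pt g00_nonzero] Chr_gtil_j00[OF pt g00_nonzero]
        Chr_gtil_0kl[OF pt g00_nonzero] Chr_gtil_jkl[OF pt g00_nonzero])
  also have "\<dots> = pd None (RicUp g i l) t x - (1/2) * hessUp g i l t x
      - (\<Sum>m\<in>UNIV. RicUp g i m t x * RicUp g m l t x)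
      + ((pd None (Scal g) t x - \<epsilon> / (2 * (t + \<delta>)^2)) / (2 * g00 t x) * - RicUp g i l t x
         - Dsp i (Scal g) t x / (2 * g00 t x) * (-(1/2) * gradUp g l t x))"
    by (simp add: hessUp_def sum_distrib_left sum_negf algebra_simps)
  also have "(pd None (Scal g) t x - \<epsilon> / (2 * (t + \<delta>)^2)) / (2 * g00 t x) * - RicUp g i l t x
      - Dsp i (Scal g) t x / (2 * g00 t x) * (-(1/2) * gradUp g l t x)
      = - (((pd None (Scal g) t x / 2 + (- \<epsilon>) / (4 * (t + \<delta>)^2)) * RicUp g i l t x
           - Dsp i (Scal g) t x * gradUp g l t x / 4) / g00 t x)"
  proof -
    have "(t + \<delta>)^2 \<noteq> 0"
      using time_pos[OF pt] by simp
    then show ?thesis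
      using g00_nonzero by (simp add: field_simps)
  qed
  finally show ?thesis
    by simp
qed

end

theorem lemma4p4:
  fixes g :: "'n::finite \<Rightarrow> 'n \<Rightarrow> 'n fld"
    and U :: "(real \<times> (real^'n)) set"
    and T \<epsilon> \<delta> t :: real and x :: "real^'n"
  assumes U_open: "open U"
    and U_time: "U \<subseteq> {0<..<T} \<times> UNIV"
    and g_smooth: "\<And>i j. smooth_on U (g i j)"
    and g_sym: "\<And>i j s y. (s, y) \<in> U \<Longrightarrow> g i j s y = g j i s y"
    and g_pos: "\<And>s y. (s, y) \<in> U \<Longrightarrow> posdef_at g s y"
    and ricci_flow: "\<And>i j s y. (s, y) \<in> U \<Longrightarrow>
        ((\<lambda>r. g i j r y) has_real_derivative (-2 * Ric g i j s y)) (at s)"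
    and eps: "\<epsilon> > 0" and del: "\<delta> > 0"
    and pt: "(t, x) \<in> U"
    and gtil_pos: "posdef_at (gtil g \<epsilon> \<delta>) t x"
  shows
    "(\<forall>i j k l. Rtil g \<epsilon> \<delta> (Some i) (Some j) (Some k) (Some l) t x =
        Rm g i j k l t x
        - (RicUp g i l t x * Ric g j k t x - RicUp g j l t x * Ric g i k t x)
          * inverse (Scal g t x + \<epsilon> * inverse (2 * t + 2 * \<delta>)))
   \<and> (\<forall>j k l. Rtil g \<epsilon> \<delta> None (Some j) (Some k) (Some l) t x =
        - nabRicUp g k j l t x + nabUpRic g l j k t x
        - (1/2) * (Ric g j k t x * gradUp g l t x - RicUp g j l t x * Dsp k (Scal g) t x)
          * inverse (Scal g t x + \<epsilon> * inverse (2 * t + 2 * \<delta>)))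
   \<and> (\<forall>i l. Rtil g \<epsilon> \<delta> (Some i) None None (Some l) t x =
        pd None (RicUp g i l) t x - (1/2) * hessUp g i l t x
        - (\<Sum>m\<in>UNIV. RicUp g i m t x * RicUp g m l t x)
        - ((pd None (Scal g) t x / 2 + (- \<epsilon>) / (4 * (t + \<delta>)^2)) * RicUp g i l t x
           - Dsp i (Scal g) t x * gradUp g l t x / 4)
          * inverse (Scal g t x + \<epsilon> * inverse (2 * t + 2 * \<delta>)))"
proof -
  interpret ricci_flow_chart g U \<epsilon> \<delta> t x
    using U_open U_time g_smooth g_sym g_pos ricci_flow del pt gtil_pos
    by unfold_locales auto
  show ?thesis
    unfolding g00_at_pt_eq
    by (simp only: Rtil_space Rtil_time_space Rtil_space_time_time divide_inverse simp_thms)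
qed

end
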